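(* Let $\mathcal G$ be a directed graph with no self loops, with $n$ vertices and edge set $\mathcal E=\{1,\dots,m\}$, and let $B=S-D$ be its incidence matrix. Let $g\in\mathcal E$ and $x\in\mathbb{R}^m$, and let \[ z=(I+B^\mathsf{T}DE^g)\,x. \] Then $z_g=0$. Moreover, for every edge $l\in\mathcal E$ with $\mathrm{src}(l)\neq\mathrm{dst}(g)$ and $\mathrm{dst}(l)\neq\mathrm{dst}(g)$, we have $z_l=x_l$.
   Context: $S,D\in\mathbb{R}^{n\times m}$ are defined by $S_{ie}=1$ if node $i$ is the source of edge $e$ (else $0$), and $D_{ie}=1$ if node $i$ is the destination of edge $e$ (else $0$). $\mathrm{src}(e)$ and $\mathrm{dst}(e)$ denote the source and destination of edge $e$. $E^g\in\mathbb{R}^{m\times m}$ is the matrix with all entries zero except $E^g_{gg}=1$. *)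

theory Defs
  imports "HOL-Analysis.Analysis"
begin

text \<open>Vertices are indexed by a finite type 'n (n = CARD('n)), edges by a finite
type 'm (m = CARD('m)). An edge e goes from src e to dst e.\<close>

definition src_mat :: "('m \<Rightarrow> 'n) \<Rightarrow> real ^ 'm ^ 'n" where
  "src_mat src = (\<chi> i e. if src e = i then 1 else 0)"

definition dst_mat :: "('m \<Rightarrow> 'n) \<Rightarrow> real ^ 'm ^ 'n" where
  "dst_mat dst = (\<chi> i e. if dst e = i then 1 else 0)"

definition incidence_mat :: "('m \<Rightarrow> 'n) \<Rightarrow> ('m \<Rightarrow> 'n) \<Rightarrow> real ^ 'm ^ 'n" where
  "incidence_mat src dst = src_mat src - dst_mat dst"

definition E_mat :: "'m \<Rightarrow> real ^ 'm ^ 'm" where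
  "E_mat g = (\<chi> i j. if i = g \<and> j = g then 1 else 0)"

end

theory Submission
  imports Defs
begin

text \<open>Since \<open>E\<^sup>g\<close> kills every column but the \<open>g\<close>-th, \<open>z = x + x\<^sub>g c\<close> where \<open>c\<close> is
  column \<open>g\<close> of \<open>B\<^sup>T D\<close>, and \<open>c\<^sub>l = [src l = dst g] - [dst l = dst g]\<close>. Without self loops
  \<open>c\<^sub>g = -1\<close>, and \<open>c\<^sub>l = 0\<close> for every edge \<open>l\<close> not incident to \<open>dst g\<close>.\<close>

lemma matrix_mult_E_mat_component:
  fixes M :: "real ^ 'm ^ 'k"
  shows "(M ** E_mat g) $ i $ j = (if j = g then M $ i $ g else 0)"
  by (simp add: matrix_matrix_mult_def E_mat_def if_distrib[of "\<lambda>t. _ * t"] sum.delta'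
      cong: if_cong)

lemma mat_1_plus_mult_E_mat_vector_component:
  fixes M :: "real ^ 'm ^ 'm"
  shows "((mat 1 + M ** E_mat g) *v x) $ l = x $ l + M $ l $ g * x $ g"
  by (simp add: matrix_vector_mult_def matrix_mult_E_mat_component mat_def
      if_distrib[of "\<lambda>t. t * _"] sum.delta' distrib_right sum.distrib cong: if_cong)

lemma transpose_incidence_mat_mult_dst_mat_component:
  "(transpose (incidence_mat src dst) ** dst_mat dst) $ l $ h
    = of_bool (src l = dst h) - of_bool (dst l = dst h)"
  by (simp add: matrix_matrix_mult_def transpose_def incidence_mat_def src_mat_def dst_mat_def
      left_diff_distrib sum_subtractf if_distrib[of "\<lambda>t. t * _"] sum.delta' cong: if_cong)

theorem lemma3:
  fixes src dst :: "'m::finite \<Rightarrow> 'n::finite"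
    and g :: 'm and x z :: "real ^ 'm"
  assumes no_loops: "\<And>e. src e \<noteq> dst e"
    and z_def: "z = (mat 1 + transpose (incidence_mat src dst) ** dst_mat dst ** E_mat g) *v x"
  shows "z $ g = 0 \<and>
         (\<forall>l. src l \<noteq> dst g \<and> dst l \<noteq> dst g \<longrightarrow> z $ l = x $ l)"
proof -
  have z_component: "z $ l = x $ l + (of_bool (src l = dst g) - of_bool (dst l = dst g)) * x $ g"
    for l
    by (simp add: z_def mat_1_plus_mult_E_mat_vector_component
        transpose_incidence_mat_mult_dst_mat_component)
  show ?thesis
    using no_loops[of g] by (simp add: z_component)
qed

end
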